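(* For any $n$-agent all-pay rank-based mechanism with allocation rule $x$ and any $\delta<1/n$, the equilibrium bid function $b$ satisfies (1) $b(\delta)\le \delta\,e\,x'(\delta)$, and (2) $b(1)-b(1-\delta)\le \delta\,e\,x'(1-\delta)$.
   Context: Agents have values i.i.d. from a continuous distribution $F$ on $[0,1]$; quantile $q=F(v)$ and value function $v(q)=F^{-1}(q)\in[0,1]$. For $k\in\{1,\dots,n-1\}$ the $k$-highest-bids-win allocation rule is $x_k(q)=\sum_{i=0}^{k-1}\binom{n-1}{i}q^{n-1-i}(1-q)^i$; $x_0\equiv0$, $x_n\equiv1$. A rank-based mechanism with position weights $1\ge w_1\ge\cdots\ge w_n\ge 0$ ($w_{n+1}:=0$) has allocation rule $x(q)=\sum_{k=1}^{n}(w_k-w_{k+1})x_k(q)$. In the all-pay format each agent pays his bid; the Bayes–Nash equilibrium bid as a function of quantile is defined by $b(0)=0$ and $b'(q)=v(q)\,x'(q)$. *)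

theory Defs
  imports "HOL-Analysis.Analysis"
begin

text \<open>k-highest-bids-win allocation rule x_k(q) for n agents; x_0 = 0, x_n = 1.\<close>
definition khw_alloc :: "nat \<Rightarrow> nat \<Rightarrow> real \<Rightarrow> real" where
  "khw_alloc n k q =
     (if k = 0 then 0
      else if n \<le> k then 1
      else (\<Sum>i<k. real (n - 1 choose i) * q ^ (n - 1 - i) * (1 - q) ^ i))"

definition ext_weight :: "nat \<Rightarrow> (nat \<Rightarrow> real) \<Rightarrow> nat \<Rightarrow> real" where
  "ext_weight n w k = (if k = n + 1 then 0 else w k)"

definition rank_alloc :: "nat \<Rightarrow> (nat \<Rightarrow> real) \<Rightarrow> real \<Rightarrow> real" where
  "rank_alloc n w q =
     (\<Sum>k=1..n. (ext_weight n w k - ext_weight n w (k + 1)) * khw_alloc n k q)"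

definition valid_weights :: "nat \<Rightarrow> (nat \<Rightarrow> real) \<Rightarrow> bool" where
  "valid_weights n w \<longleftrightarrow>
     (n \<ge> 1 \<longrightarrow> w 1 \<le> 1 \<and> 0 \<le> w n) \<and> (\<forall>k. 1 \<le> k \<and> k < n \<longrightarrow> w (k + 1) \<le> w k)"

definition cont_dist_01 :: "(real \<Rightarrow> real) \<Rightarrow> bool" where
  "cont_dist_01 F \<longleftrightarrow> mono F \<and> continuous_on UNIV F \<and> F 0 = 0 \<and> F 1 = 1
      \<and> (\<forall>t. 0 \<le> F t \<and> F t \<le> 1)"

text \<open>Value function v(q) = F^{-1}(q) (generalized inverse on [0,1]).\<close>
definition value_fn :: "(real \<Rightarrow> real) \<Rightarrow> real \<Rightarrow> real" where
  "value_fn F q = Inf {t \<in> {0..1}. q \<le> F t}"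

text \<open>All-pay equilibrium bid: b(0) = 0, b'(q) = v(q) x'(q), i.e.
  b(q) = integral over [0,q] of v(t) x'(t).\<close>
definition allpay_bid :: "nat \<Rightarrow> (nat \<Rightarrow> real) \<Rightarrow> (real \<Rightarrow> real) \<Rightarrow> real \<Rightarrow> real" where
  "allpay_bid n w F q = integral {0..q} (\<lambda>t. value_fn F t * deriv (rank_alloc n w) t)"

end

theory Submission
  imports Defs
begin

text \<open>
  The bid is the integral of \<open>v(t) x'(t)\<close> with \<open>0 \<le> v \<le> 1\<close>, so it suffices to bound
  \<open>x'\<close> on \<open>[0, \<delta>]\<close> by \<open>e x'(\<delta>)\<close> and on \<open>[1 - \<delta>, 1]\<close> by \<open>e x'(1 - \<delta>)\<close>. As \<open>x'\<close> is a
  nonnegative combination of the densities \<open>x\<^sub>k'(q) = k C(n-1,k) q^(n-1-k) (1-q)^(k-1)\<close>,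
  it suffices to do this for each \<open>x\<^sub>k'\<close>. On \<open>[0, \<delta>]\<close> the factor \<open>q^(n-1-k)\<close> increases,
  while \<open>(1-q)^(k-1)\<close> drops by at most the factor
  \<open>(1-\<delta>)^-(n-2) \<le> exp ((n-2) \<delta> / (1-\<delta>)) \<le> e\<close>, using \<open>n \<delta> < 1\<close>.
  The interval near 1 is the mirror image under \<open>q \<mapsto> 1 - q\<close>.
\<close>

lemma binomial_partial_sum_has_real_derivative:
  fixes q :: real
  assumes "k \<le> N"
  shows "((\<lambda>q. \<Sum>i<k. real (N choose i) * q ^ (N - i) * (1 - q) ^ i) has_real_derivative
          real k * real (N choose k) * q ^ (N - k) * (1 - q) ^ (k - 1)) (at q)"
  using assms
proof (induction k)
  case 0
  then show ?case by simp
next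
  case (Suc k)
  have IH: "((\<lambda>q. \<Sum>i<k. real (N choose i) * q ^ (N - i) * (1 - q) ^ i) has_real_derivative
          real k * real (N choose k) * q ^ (N - k) * (1 - q) ^ (k - 1)) (at q)"
    using Suc by simp
  have summand: "((\<lambda>q. real (N choose k) * q ^ (N - k) * (1 - q) ^ k) has_real_derivative
      real (N choose k) * (real (N - k) * q ^ (N - k - 1) * (1 - q) ^ k
        - q ^ (N - k) * (real k * (1 - q) ^ (k - 1)))) (at q)"
    by (auto intro!: derivative_eq_intros simp: algebra_simps)
  have absorb: "real (N - k) * real (N choose k) = real (Suc k) * real (N choose Suc k)"
    using binomial_absorption[of k N] binomial_absorb_comp[of N k] by (metis of_nat_mult)
  \<comment> \<open>the \<open>-k\<close> part of the new term cancels the old derivative (telescoping)\<close>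
  have "real k * real (N choose k) * q ^ (N - k) * (1 - q) ^ (k - 1)
      + real (N choose k) * (real (N - k) * q ^ (N - k - 1) * (1 - q) ^ k
        - q ^ (N - k) * (real k * (1 - q) ^ (k - 1)))
     = (real (N - k) * real (N choose k)) * q ^ (N - Suc k) * (1 - q) ^ k"
    by (simp add: algebra_simps)
  also have "\<dots> = real (Suc k) * real (N choose Suc k) * q ^ (N - Suc k) * (1 - q) ^ (Suc k - 1)"
    by (simp only: absorb) simp
  finally show ?case
    using DERIV_add[OF IH summand] by simp
qed

definition khw_alloc_deriv :: "nat \<Rightarrow> nat \<Rightarrow> real \<Rightarrow> real" where
  "khw_alloc_deriv n k q =
     (if k < n then real k * real (n - 1 choose k) * q ^ (n - 1 - k) * (1 - q) ^ (k - 1) else 0)"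

lemma khw_alloc_has_real_derivative:
  "(khw_alloc n k has_real_derivative khw_alloc_deriv n k q) (at q)"
proof (cases "k = 0 \<or> n \<le> k")
  case True
  then have "khw_alloc n k = (\<lambda>_. if k = 0 then 0 else 1)"
    by (auto simp: khw_alloc_def)
  then show ?thesis
    using True by (auto simp: khw_alloc_deriv_def)
next
  case False
  then have "khw_alloc n k = (\<lambda>q. \<Sum>i<k. real (n - 1 choose i) * q ^ (n - 1 - i) * (1 - q) ^ i)"
    by (auto simp: khw_alloc_def)
  moreover have "k \<le> n - 1"
    using False by linarith
  ultimately show ?thesis
    using False binomial_partial_sum_has_real_derivative[of k "n - 1" q]
    by (simp add: khw_alloc_deriv_def)
qed

definition rank_alloc_deriv :: "nat \<Rightarrow> (nat \<Rightarrow> real) \<Rightarrow> real \<Rightarrow> real" where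
  "rank_alloc_deriv n w q =
     (\<Sum>k=1..n. (ext_weight n w k - ext_weight n w (k + 1)) * khw_alloc_deriv n k q)"

lemma rank_alloc_has_real_derivative:
  "(rank_alloc n w has_real_derivative rank_alloc_deriv n w q) (at q)"
  unfolding rank_alloc_def[abs_def] rank_alloc_deriv_def
  by (auto intro!: derivative_eq_intros khw_alloc_has_real_derivative simp: mult.commute)

lemma deriv_rank_alloc: "deriv (rank_alloc n w) q = rank_alloc_deriv n w q"
  using rank_alloc_has_real_derivative DERIV_imp_deriv by blast

lemma continuous_on_khw_alloc_deriv: "continuous_on S (khw_alloc_deriv n k)"
  by (cases "k < n") (auto simp: khw_alloc_deriv_def[abs_def] intro!: continuous_intros)

lemma continuous_on_rank_alloc_deriv: "continuous_on S (rank_alloc_deriv n w)"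
  unfolding rank_alloc_deriv_def[abs_def]
  by (auto intro!: continuous_intros continuous_on_khw_alloc_deriv)

lemma ext_weight_diff_nonneg:
  assumes "valid_weights n w" "k \<in> {1..n}"
  shows "0 \<le> ext_weight n w k - ext_weight n w (k + 1)"
  using assms by (auto simp: valid_weights_def ext_weight_def)

lemma rank_alloc_deriv_nonneg:
  assumes "valid_weights n w" "0 \<le> q" "q \<le> 1"
  shows "0 \<le> rank_alloc_deriv n w q"
  unfolding rank_alloc_deriv_def khw_alloc_deriv_def
  using assms by (intro sum_nonneg mult_nonneg_nonneg ext_weight_diff_nonneg) auto

lemma rank_alloc_deriv_le_if_khw_alloc_deriv_le:
  assumes "valid_weights n w"
    and "\<And>k. k \<in> {1..n} \<Longrightarrow> khw_alloc_deriv n k t \<le> c * khw_alloc_deriv n k s"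
  shows "rank_alloc_deriv n w t \<le> c * rank_alloc_deriv n w s"
  unfolding rank_alloc_deriv_def sum_distrib_left
proof (rule sum_mono)
  fix k assume "k \<in> {1..n}"
  then show "(ext_weight n w k - ext_weight n w (k + 1)) * khw_alloc_deriv n k t
      \<le> c * ((ext_weight n w k - ext_weight n w (k + 1)) * khw_alloc_deriv n k s)"
    using mult_left_mono[OF assms(2) ext_weight_diff_nonneg[OF assms(1)]] by (simp add: algebra_simps)
qed

lemma one_le_exp1_mult_one_minus_power:
  fixes \<delta> :: real
  assumes "0 \<le> \<delta>" "\<delta> < 1" "real j * \<delta> \<le> 1 - \<delta>"
  shows "1 \<le> exp 1 * (1 - \<delta>) ^ j"
proof -
  define y where "y = \<delta> / (1 - \<delta>)"
  have "1 / (1 - \<delta>) = 1 + y"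
    using assms by (simp add: y_def field_simps)
  then have "(1 / (1 - \<delta>)) ^ j \<le> exp y ^ j"
    using assms by (intro power_mono) (auto simp: y_def add.commute exp_ge_add_one_self)
  also have "\<dots> = exp (real j * y)"
    by (simp add: exp_of_nat_mult)
  also have "\<dots> \<le> exp 1"
    using assms by (simp add: y_def field_simps)
  finally show ?thesis
    using assms by (simp add: power_divide field_simps)
qed

lemma monomial_le_exp1_mult_near_zero:
  fixes t \<delta> :: real
  assumes "0 \<le> t" "t \<le> \<delta>" "\<delta> < 1" "real b * \<delta> \<le> 1 - \<delta>"
  shows "t ^ a * (1 - t) ^ b \<le> exp 1 * (\<delta> ^ a * (1 - \<delta>) ^ b)"
proof -
  have "(1 - t) ^ b \<le> exp 1 * (1 - \<delta>) ^ b"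
    using assms one_le_exp1_mult_one_minus_power[of \<delta> b] power_le_one[of "1 - t" b] by linarith
  then have "t ^ a * (1 - t) ^ b \<le> \<delta> ^ a * (exp 1 * (1 - \<delta>) ^ b)"
    using assms by (intro mult_mono power_mono) auto
  then show ?thesis
    by (simp add: algebra_simps)
qed

lemma khw_alloc_deriv_le_near_zero:
  assumes "0 \<le> t" "t \<le> \<delta>" "real n * \<delta> \<le> 1"
  shows "khw_alloc_deriv n k t \<le> exp 1 * khw_alloc_deriv n k \<delta>"
proof (cases "0 < k \<and> k < n")
  case True
  have "real k * \<delta> \<le> (real n - 1) * \<delta>" "2 * \<delta> \<le> real n * \<delta>"
    using True assms by (intro mult_right_mono; simp)+
  then have "real (k - 1) * \<delta> \<le> 1 - \<delta>" "\<delta> < 1"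
    using True assms by (auto simp: of_nat_diff algebra_simps)
  then have "t ^ (n - 1 - k) * (1 - t) ^ (k - 1)
      \<le> exp 1 * (\<delta> ^ (n - 1 - k) * (1 - \<delta>) ^ (k - 1))"
    using assms by (intro monomial_le_exp1_mult_near_zero) auto
  from mult_left_mono[OF this, of "real k * real (n - 1 choose k)"] show ?thesis
    using True by (simp add: khw_alloc_deriv_def algebra_simps)
qed (auto simp: khw_alloc_deriv_def)

lemma khw_alloc_deriv_le_near_one:
  assumes "1 - \<delta> \<le> t" "t \<le> 1" "0 \<le> \<delta>" "real n * \<delta> \<le> 1"
  shows "khw_alloc_deriv n k t \<le> exp 1 * khw_alloc_deriv n k (1 - \<delta>)"
proof (cases "0 < k \<and> k < n")
  case True
  have "real (n - 1 - k) * \<delta> \<le> (real n - 1) * \<delta>" "2 * \<delta> \<le> real n * \<delta>"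
    using True assms by (intro mult_right_mono; simp)+
  then have "real (n - 1 - k) * \<delta> \<le> 1 - \<delta>" "\<delta> < 1"
    using assms by (auto simp: algebra_simps)
  then have "(1 - t) ^ (k - 1) * (1 - (1 - t)) ^ (n - 1 - k)
      \<le> exp 1 * (\<delta> ^ (k - 1) * (1 - \<delta>) ^ (n - 1 - k))"
    using assms by (intro monomial_le_exp1_mult_near_zero) auto
  from mult_left_mono[OF this, of "real k * real (n - 1 choose k)"] show ?thesis
    using True by (simp add: khw_alloc_deriv_def algebra_simps)
qed (auto simp: khw_alloc_deriv_def)

lemma value_fn_bounds:
  assumes "cont_dist_01 F" "0 \<le> q" "q \<le> 1"
  shows "0 \<le> value_fn F q" "value_fn F q \<le> 1"
proof -
  have one: "1 \<in> {t \<in> {0..1}. q \<le> F t}"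
    using assms by (auto simp: cont_dist_01_def)
  show "0 \<le> value_fn F q"
    unfolding value_fn_def using one by (intro cInf_greatest) auto
  show "value_fn F q \<le> 1"
    unfolding value_fn_def using one by (intro cInf_lower) auto
qed

lemma mono_on_value_fn:
  assumes "cont_dist_01 F"
  shows "mono_on {0..1} (value_fn F)"
proof (rule mono_onI)
  fix r s :: real assume "r \<in> {0..1}" "s \<in> {0..1}" "r \<le> s"
  then have "1 \<in> {t \<in> {0..1}. s \<le> F t}" "{t \<in> {0..1}. s \<le> F t} \<subseteq> {t \<in> {0..1}. r \<le> F t}"
    using assms by (auto simp: cont_dist_01_def)
  then show "value_fn F r \<le> value_fn F s"
    unfolding value_fn_def by (intro cInf_superset_mono) auto
qed

lemma value_fn_mult_rank_alloc_deriv_integrable: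
  assumes "cont_dist_01 F" "0 \<le> a" "b \<le> 1"
  shows "(\<lambda>t. value_fn F t * rank_alloc_deriv n w t) integrable_on {a..b}"
proof -
  have "mono_on {a..b} (value_fn F)"
    using mono_on_subset[OF mono_on_value_fn[OF assms(1)]] assms by auto
  moreover have "space lborel = space lebesgue" "sets borel \<subseteq> sets lebesgue"
    by force+
  ultimately have "value_fn F \<in> borel_measurable (lebesgue_on {a..b})"
    by (metis borel_measurable_mono_on_fnc borel_measurable_subalgebra mono_restrict_space
        space_lborel space_restrict_space)
  moreover have "bounded (value_fn F ` {a..b})"
    using value_fn_bounds[OF assms(1)] assms by (intro boundedI[of _ 1]) force
  ultimately have "(\<lambda>t. value_fn F t * rank_alloc_deriv n w t) absolutely_integrable_on {a..b}"
    by (intro absolutely_integrable_bounded_measurable_product_real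
        absolutely_integrable_continuous_real continuous_on_rank_alloc_deriv) auto
  then show ?thesis
    using set_lebesgue_integral_eq_integral(1) by blast
qed

lemma allpay_bid_increment_le:
  assumes "valid_weights n w" "cont_dist_01 F" "0 \<le> a" "a \<le> b" "b \<le> 1"
    and "\<And>t. t \<in> {a..b} \<Longrightarrow> rank_alloc_deriv n w t \<le> M"
  shows "allpay_bid n w F b - allpay_bid n w F a \<le> (b - a) * M"
proof -
  let ?g = "\<lambda>t. value_fn F t * rank_alloc_deriv n w t"
  have "integral {0..a} ?g + integral {a..b} ?g = integral {0..b} ?g"
    using assms by (intro Henstock_Kurzweil_Integration.integral_combine
        value_fn_mult_rank_alloc_deriv_integrable) auto
  then have "allpay_bid n w F b - allpay_bid n w F a = integral {a..b} ?g"
    by (simp add: allpay_bid_def deriv_rank_alloc)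
  also have "\<dots> \<le> integral {a..b} (\<lambda>_. M)"
  proof (rule integral_le)
    show "?g integrable_on {a..b}"
      using assms by (intro value_fn_mult_rank_alloc_deriv_integrable) auto
    fix t assume t: "t \<in> {a..b}"
    then have "?g t \<le> rank_alloc_deriv n w t"
      using assms value_fn_bounds[OF assms(2), of t] rank_alloc_deriv_nonneg[OF assms(1), of t]
      by (intro mult_left_le_one_le) auto
    then show "?g t \<le> M"
      using assms(6)[OF t] by linarith
  qed auto
  finally show ?thesis
    using assms by simp
qed

theorem mainTheorem8:
  fixes n :: nat and w :: "nat \<Rightarrow> real" and F :: "real \<Rightarrow> real" and \<delta> :: real
  assumes "n \<ge> 1"
    and "valid_weights n w"
    and "cont_dist_01 F"
    and "0 \<le> \<delta>" and "\<delta> < 1 / real n"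
  shows "allpay_bid n w F \<delta> \<le> \<delta> * exp 1 * deriv (rank_alloc n w) \<delta>
       \<and> allpay_bid n w F 1 - allpay_bid n w F (1 - \<delta>)
           \<le> \<delta> * exp 1 * deriv (rank_alloc n w) (1 - \<delta>)"
proof -
  have n\<delta>: "real n * \<delta> \<le> 1"
    using assms by (simp add: field_simps)
  then have "\<delta> \<le> 1"
    using assms mult_right_mono[of 1 "real n" \<delta>] by simp
  have "allpay_bid n w F \<delta> - allpay_bid n w F 0 \<le> (\<delta> - 0) * (exp 1 * rank_alloc_deriv n w \<delta>)"
    using assms \<open>\<delta> \<le> 1\<close> n\<delta> khw_alloc_deriv_le_near_zero
    by (intro allpay_bid_increment_le rank_alloc_deriv_le_if_khw_alloc_deriv_le) auto
  moreover have "allpay_bid n w F 1 - allpay_bid n w F (1 - \<delta>)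
      \<le> (1 - (1 - \<delta>)) * (exp 1 * rank_alloc_deriv n w (1 - \<delta>))"
    using assms \<open>\<delta> \<le> 1\<close> n\<delta> khw_alloc_deriv_le_near_one
    by (intro allpay_bid_increment_le rank_alloc_deriv_le_if_khw_alloc_deriv_le) auto
  moreover have "allpay_bid n w F 0 = 0"
    by (simp add: allpay_bid_def)
  ultimately show ?thesis
    by (simp add: deriv_rank_alloc mult.assoc)
qed

end
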